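(* Let $n\ge 1$ and $0\le r\le n$, and let $G_{n,r}$ be the simple graph on $V=\{0,1,\ldots,n\}$ obtained from the complete graph $K_{n+1}$ by deleting the $r$ edges $\{0,i\}$ for $n-r+1\le i\le n$. Then $\dim_{\mathbb K}\left(R_n/\mathcal{M}_{G_{n,r}}^{(1)}\right)=\det\left(\widetilde Q_{G_{n,r}}\right)$.
   Context: $\mathbb K$ is a field, $R_n=\mathbb K[x_1,\ldots,x_n]$. For a loopless multigraph $G$ on $V=\{0,1,\ldots,n\}$ with adjacency matrix $[a_{ij}]_{0\le i,j\le n}$ ($a_{ij}=a_{ji}$ = number of edges between $i$ and $j$, $a_{ii}=0$), and $\emptyset\ne A\subseteq[n]$, put $d_A(i)=\sum_{j\in V\setminus A}a_{ij}$ for $i\in A$, and $m_A=\prod_{i\in A}x_i^{d_A(i)}$. The $1$-skeleton ideal is $\mathcal{M}_G^{(1)}=\langle m_A:\emptyset\ne A\subseteq[n],\ |A|\le 2\rangle\subseteq R_n$. Writing $d_i=\sum_{j\in V}a_{ij}$, the truncated signless Laplace matrix $\widetilde Q_G$ is the $n\times n$ matrix with entries $(\widetilde Q_G)_{ii}=d_i$ and $(\widetilde Q_G)_{ij}=a_{ij}$ for $i\ne j$, $i,j\in[n]$ (i.e. $D+A(G)$ with row and column of the root $0$ deleted). *)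

theory Defs
  imports "HOL-Library.Poly_Mapping" "HOL-Library.Extended_Nat" "Jordan_Normal_Form.Determinant"
begin

text \<open>Polynomials in the variables x_i (i :: nat) over a field are modelled as
  finitely supported maps from exponent vectors (nat to nat, finite support) to coefficients.\<close>

type_synonym 'k mpoly = "(nat \<Rightarrow>\<^sub>0 nat) \<Rightarrow>\<^sub>0 'k"

definition R :: "nat \<Rightarrow> 'k::field mpoly set" where
  "R n = {p. \<forall>m \<in> Poly_Mapping.keys p. Poly_Mapping.keys m \<subseteq> {1..n}}"

definition smult_mp :: "'k::field \<Rightarrow> 'k mpoly \<Rightarrow> 'k mpoly" where
  "smult_mp c p = Poly_Mapping.single 0 c * p"

definition ideal_gen :: "nat \<Rightarrow> 'k::field mpoly set \<Rightarrow> 'k mpoly set" where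
  "ideal_gen n Gs = {p. \<exists>q. (\<forall>g\<in>Gs. q g \<in> R n) \<and> p = (\<Sum>g\<in>Gs. q g * g)}"

text \<open>A finite set S of elements of R_n is linearly independent modulo I,
  i.e. its image in R_n / I is linearly independent (and injective).\<close>
definition indep_mod :: "nat \<Rightarrow> 'k::field mpoly set \<Rightarrow> 'k mpoly set \<Rightarrow> bool" where
  "indep_mod n I S \<longleftrightarrow> finite S \<and> S \<subseteq> R n \<and>
     (\<forall>c. (\<Sum>s\<in>S. smult_mp (c s) s) \<in> I \<longrightarrow> (\<forall>s\<in>S. c s = 0))"

text \<open>dim_K (R_n / I), as an extended natural (\<infinity> if infinite-dimensional).\<close>
definition quot_dim :: "nat \<Rightarrow> 'k::field mpoly set \<Rightarrow> enat" where
  "quot_dim n I = Sup {enat (card S) | S. indep_mod n I S}"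

text \<open>Multigraph on {0..n} given by its adjacency function a (only used on {0..n}).\<close>
definition dA :: "nat \<Rightarrow> (nat \<Rightarrow> nat \<Rightarrow> nat) \<Rightarrow> nat set \<Rightarrow> nat \<Rightarrow> nat" where
  "dA n a A i = (\<Sum>j\<in>{0..n} - A. a i j)"

definition mA :: "nat \<Rightarrow> (nat \<Rightarrow> nat \<Rightarrow> nat) \<Rightarrow> nat set \<Rightarrow> 'k::field mpoly" where
  "mA n a A = Poly_Mapping.single (\<Sum>i\<in>A. Poly_Mapping.single i (dA n a A i)) 1"

definition skeleton1_gens :: "nat \<Rightarrow> (nat \<Rightarrow> nat \<Rightarrow> nat) \<Rightarrow> 'k::field mpoly set" where
  "skeleton1_gens n a = {mA n a A | A. A \<noteq> {} \<and> A \<subseteq> {1..n} \<and> card A \<le> 2}"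

definition skeleton1_ideal :: "nat \<Rightarrow> (nat \<Rightarrow> nat \<Rightarrow> nat) \<Rightarrow> 'k::field mpoly set" where
  "skeleton1_ideal n a = ideal_gen n (skeleton1_gens n a)"

text \<open>Truncated signless Laplacian; row/column k (0-based) corresponds to vertex k+1.\<close>
definition trunc_Q :: "nat \<Rightarrow> (nat \<Rightarrow> nat \<Rightarrow> nat) \<Rightarrow> int mat" where
  "trunc_Q n a = mat n n (\<lambda>(k, l). if k = l then int (\<Sum>j\<in>{0..n}. a (k+1) j)
                                    else int (a (k+1) (l+1)))"

definition Gnr :: "nat \<Rightarrow> nat \<Rightarrow> nat \<Rightarrow> nat \<Rightarrow> nat" where
  "Gnr n r i j = (if i = j then 0
                  else if (i = 0 \<and> n - r + 1 \<le> j) \<or> (j = 0 \<and> n - r + 1 \<le> i) then 0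
                  else 1)"

end

theory Submission
  imports Defs
begin

text \<open>For a multigraph whose restriction to the non-root vertices 1, ..., n is the complete
  graph K_n, the generators of the 1-skeleton ideal are the monomials x_i^{e_i} and
  x_i^{e_i - 1} x_j^{e_j - 1}, where e_i is the degree of i. Modulo a monomial ideal the standard
  monomials (those divisible by no generator) form a basis, and here they are the exponent vectors b
  with b_i < e_i for all i and b_i = e_i - 1 for at most one i. Counting them gives
  \<Prod>_i (e_i - 1) + \<Sum>_i \<Prod>_{j \<noteq> i} (e_j - 1), which is also the determinant of the
  truncated signless Laplacian, because that matrix is diag(e_i - 1) plus the all-ones matrix.
  In G_{n,r} every degree is positive unless n = r = 1, where both sides vanish.\<close>

section \<open>Polynomials and ideals of \<open>R\<^sub>n\<close>\<close>

lemma lookup_smult_mp [simp]: "Poly_Mapping.lookup (smult_mp c p) k = c * Poly_Mapping.lookup p k"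
  unfolding smult_mp_def mult_map_scale_conv_mult[symmetric]
  by transfer (simp add: when_def)

interpretation mpoly: vector_space "smult_mp :: 'k::field \<Rightarrow> 'k mpoly \<Rightarrow> 'k mpoly"
  by unfold_locales (auto intro!: poly_mapping_eqI simp: lookup_add algebra_simps)

lemma (in vector_space) card_le_card_if_coefficients_vanish:
  assumes "finite S" "finite B" "f ` S \<subseteq> span B"
    and vanish: "\<And>c. (\<Sum>s\<in>S. c s *s f s) = 0 \<Longrightarrow> \<forall>s\<in>S. c s = 0"
  shows "card S \<le> card B"
proof -
  have inj: "inj_on f S"
  proof (rule inj_onI, rule ccontr)
    fix s t assume st: "s \<in> S" "t \<in> S" "f s = f t" "s \<noteq> t"
    define c where "c x = (if x = s then 1 else if x = t then -1 else (0::'a))" for x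
    have "(\<Sum>x\<in>S. c x *s f x) = (\<Sum>x\<in>{s, t}. c x *s f x)"
      using st \<open>finite S\<close> by (intro sum.mono_neutral_right) (auto simp: c_def)
    also have "\<dots> = 0"
      using st by (simp add: c_def)
    finally have "c s = 0"
      using vanish st(1) by blast
    then show False
      by (simp add: c_def)
  qed
  have "independent (f ` S)"
  proof (rule independent_if_scalars_zero)
    fix c v assume "(\<Sum>v\<in>f ` S. c v *s v) = 0" "v \<in> f ` S"
    then show "c v = 0"
      using vanish[of "c \<circ> f"] by (auto simp: sum.reindex[OF inj])
  qed (use \<open>finite S\<close> in simp)
  then have "card (f ` S) \<le> card B"
    using independent_span_bound assms(2,3) by blast
  then show ?thesis
    by (simp add: card_image[OF inj])
qed

lemma inj_single_one: "inj (\<lambda>b. Poly_Mapping.single b (1::'k::zero_neq_one))"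
  by (rule injI) (metis lookup_single_eq lookup_single_not_eq one_neq_zero)

lemma R_zero: "0 \<in> R n"
  unfolding R_def by simp

lemma R_add: "p \<in> R n \<Longrightarrow> q \<in> R n \<Longrightarrow> p + q \<in> R n"
  unfolding R_def using keys_add[of p q] by blast

lemma R_sum: "(\<And>x. x \<in> A \<Longrightarrow> f x \<in> R n) \<Longrightarrow> sum f A \<in> R n"
  by (induction A rule: infinite_finite_induct) (auto simp: R_zero R_add)

lemma R_smult: "p \<in> R n \<Longrightarrow> smult_mp c p \<in> R n"
  unfolding R_def by (auto simp: in_keys_iff)

lemma R_single: "Poly_Mapping.keys b \<subseteq> {1..n} \<Longrightarrow> Poly_Mapping.single b c \<in> R n"
  unfolding R_def by auto

lemma ideal_gen_zero: "0 \<in> ideal_gen n Gs"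
  unfolding ideal_gen_def by (auto intro!: exI[of _ "\<lambda>_. 0"] simp: R_zero)

lemma ideal_gen_add:
  assumes "p \<in> ideal_gen n Gs" "p' \<in> ideal_gen n Gs"
  shows "p + p' \<in> ideal_gen n Gs"
proof -
  obtain q q' where "\<forall>g\<in>Gs. q g \<in> R n" "p = (\<Sum>g\<in>Gs. q g * g)"
    and "\<forall>g\<in>Gs. q' g \<in> R n" "p' = (\<Sum>g\<in>Gs. q' g * g)"
    using assms unfolding ideal_gen_def by blast
  then show ?thesis
    unfolding ideal_gen_def
    by (intro CollectI exI[of _ "\<lambda>g. q g + q' g"]) (simp add: R_add distrib_right sum.distrib)
qed

lemma ideal_gen_sum: "(\<And>x. x \<in> A \<Longrightarrow> f x \<in> ideal_gen n Gs) \<Longrightarrow> sum f A \<in> ideal_gen n Gs"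
  by (induction A rule: infinite_finite_induct) (auto simp: ideal_gen_zero ideal_gen_add)

lemma mult_mem_ideal_gen:
  assumes "finite Gs" "g \<in> Gs" "p \<in> R n"
  shows "p * g \<in> ideal_gen n Gs"
proof -
  have "(\<Sum>g'\<in>Gs. (if g' = g then p else 0) * g') = p * g"
    using assms by (simp add: if_distrib[of "\<lambda>x. x * _"] cong: if_cong)
  then show ?thesis
    unfolding ideal_gen_def using assms
    by (intro CollectI exI[of _ "\<lambda>g'. if g' = g then p else 0"]) (auto simp: R_zero)
qed

section \<open>Monomial ideals\<close>

abbreviation monomial_ideal :: "nat \<Rightarrow> (nat \<Rightarrow>\<^sub>0 nat) set \<Rightarrow> 'k::field mpoly set" where
  "monomial_ideal n Ms \<equiv> ideal_gen n ((\<lambda>m. Poly_Mapping.single m 1) ` Ms)"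

text \<open>Divisibility of monomials is written additively on exponent vectors.\<close>

definition standard_monomials :: "nat \<Rightarrow> (nat \<Rightarrow>\<^sub>0 nat) set \<Rightarrow> (nat \<Rightarrow>\<^sub>0 nat) set" where
  "standard_monomials n Ms = {b. Poly_Mapping.keys b \<subseteq> {1..n} \<and> (\<forall>m\<in>Ms. \<nexists>c. b = c + m)}"

definition restrict_terms :: "(nat \<Rightarrow>\<^sub>0 nat) set \<Rightarrow> 'k::field mpoly \<Rightarrow> 'k mpoly" where
  "restrict_terms B p = (\<Sum>b\<in>B. Poly_Mapping.single b (Poly_Mapping.lookup p b))"

lemma lookup_restrict_terms:
  "finite B \<Longrightarrow> Poly_Mapping.lookup (restrict_terms B p) k = (if k \<in> B then Poly_Mapping.lookup p k else 0)"
  unfolding restrict_terms_def by (simp add: lookup_sum lookup_single when_def)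

lemma restrict_terms_sum_smult:
  "finite B \<Longrightarrow> restrict_terms B (\<Sum>s\<in>S. smult_mp (c s) s) = (\<Sum>s\<in>S. smult_mp (c s) (restrict_terms B s))"
  by (rule poly_mapping_eqI) (simp add: lookup_restrict_terms lookup_sum sum_distrib_left)

lemma lookup_mult_single_not_multiple:
  assumes "\<nexists>c. b = c + m"
  shows "Poly_Mapping.lookup (q * Poly_Mapping.single m 1) b = (0::'k::field)"
proof -
  have "(\<Sum>m'. Poly_Mapping.lookup (Poly_Mapping.single m (1::'k)) m' when b = l + m') = 0" for l
  proof -
    have "(\<lambda>m'. Poly_Mapping.lookup (Poly_Mapping.single m (1::'k)) m' when b = l + m') = (\<lambda>_. 0)"
      using assms by (intro ext) (auto simp: lookup_single when_def)
    then show ?thesis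
      by (simp only: Sum_any.neutral)
  qed
  then show ?thesis
    by (simp add: lookup_mult)
qed

lemma lookup_monomial_ideal_standard:
  assumes "p \<in> monomial_ideal n Ms" "b \<in> standard_monomials n Ms"
  shows "Poly_Mapping.lookup p b = (0::'k::field)"
proof -
  obtain q where p: "p = (\<Sum>g\<in>(\<lambda>m. Poly_Mapping.single m (1::'k)) ` Ms. q g * g)"
    using assms(1) unfolding ideal_gen_def by blast
  have "Poly_Mapping.lookup (q (Poly_Mapping.single m 1) * Poly_Mapping.single m 1) b = 0" if "m \<in> Ms" for m
    using assms(2) that unfolding standard_monomials_def
    by (intro lookup_mult_single_not_multiple) blast
  then show ?thesis
    by (auto simp: p lookup_sum intro!: sum.neutral)
qed

text \<open>Every term of \<open>p\<close> outside the standard monomials is a multiple of a generator.\<close>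

lemma diff_restrict_terms_mem_monomial_ideal:
  assumes "finite Ms" "finite (standard_monomials n Ms)" "p \<in> R n"
  shows "p - restrict_terms (standard_monomials n Ms) p \<in> (monomial_ideal n Ms :: 'k::field mpoly set)"
proof -
  let ?S = "standard_monomials n Ms"
  have "p - restrict_terms ?S p = (\<Sum>b\<in>Poly_Mapping.keys p - ?S. Poly_Mapping.single b (Poly_Mapping.lookup p b))"
    by (rule poly_mapping_eqI)
      (auto simp: lookup_minus lookup_restrict_terms assms(2) lookup_sum lookup_single when_def in_keys_iff)
  also have "\<dots> \<in> monomial_ideal n Ms"
  proof (rule ideal_gen_sum)
    fix b assume b: "b \<in> Poly_Mapping.keys p - ?S"
    then have keys_b: "Poly_Mapping.keys b \<subseteq> {1..n}"
      using assms(3) unfolding R_def by blast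
    then obtain m c where m: "m \<in> Ms" "b = c + m"
      using b unfolding standard_monomials_def by blast
    have "Poly_Mapping.keys c \<subseteq> Poly_Mapping.keys b"
      by (auto simp: m(2) in_keys_iff lookup_add)
    then have "Poly_Mapping.single c (Poly_Mapping.lookup p b) * Poly_Mapping.single m 1 \<in> monomial_ideal n Ms"
      using keys_b m(1) assms(1) by (intro mult_mem_ideal_gen R_single) auto
    then show "Poly_Mapping.single b (Poly_Mapping.lookup p b) \<in> monomial_ideal n Ms"
      by (simp add: mult_single m(2))
  qed
  finally show ?thesis .
qed

lemma indep_mod_standard_monomials:
  assumes "finite (standard_monomials n Ms)"
  shows "indep_mod n (monomial_ideal n Ms :: 'k::field mpoly set)
           ((\<lambda>b. Poly_Mapping.single b 1) ` standard_monomials n Ms)"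
  unfolding indep_mod_def
proof (intro conjI allI impI ballI)
  let ?S = "standard_monomials n Ms"
  show "finite ((\<lambda>b. Poly_Mapping.single b (1::'k)) ` ?S)"
    using assms by simp
  show "(\<lambda>b. Poly_Mapping.single b 1) ` ?S \<subseteq> (R n :: 'k mpoly set)"
    unfolding standard_monomials_def by (auto intro!: R_single)
  fix c and s :: "'k mpoly"
  assume mem: "(\<Sum>s\<in>(\<lambda>b. Poly_Mapping.single b 1) ` ?S. smult_mp (c s) s) \<in> (monomial_ideal n Ms :: 'k mpoly set)"
    and "s \<in> (\<lambda>b. Poly_Mapping.single b 1) ` ?S"
  then obtain b where b: "b \<in> ?S" "s = Poly_Mapping.single b 1"
    by blast
  have "Poly_Mapping.lookup (\<Sum>s\<in>(\<lambda>b. Poly_Mapping.single b (1::'k)) ` ?S. smult_mp (c s) s) b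
          = (\<Sum>b'\<in>?S. if b' = b then c (Poly_Mapping.single b' 1) else 0)"
    by (simp add: lookup_sum sum.reindex[OF inj_on_subset[OF inj_single_one]] lookup_single when_def
        if_distrib[of "\<lambda>x. _ * x"] eq_commute cong: if_cong)
  also have "\<dots> = c s"
    using assms b by simp
  finally show "c s = 0"
    using lookup_monomial_ideal_standard[OF mem b(1)] by simp
qed

text \<open>Modulo the ideal, every element of \<open>R n\<close> is its part on the standard monomials,
  so an independent family maps to an independent family in their span.\<close>

lemma card_le_card_standard_monomials:
  assumes "finite Ms" "finite (standard_monomials n Ms)"
    and "indep_mod n (monomial_ideal n Ms :: 'k::field mpoly set) S"
  shows "card S \<le> card (standard_monomials n Ms)"
proof -
  let ?B = "standard_monomials n Ms"
  let ?T = "restrict_terms ?B :: 'k mpoly \<Rightarrow> 'k mpoly"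
  have "finite S" "S \<subseteq> R n"
    and indep: "\<And>c. (\<Sum>s\<in>S. smult_mp (c s) s) \<in> monomial_ideal n Ms \<Longrightarrow> \<forall>s\<in>S. c s = 0"
    using assms(3) unfolding indep_mod_def by auto
  have "card S \<le> card ((\<lambda>b. Poly_Mapping.single b 1) ` ?B :: 'k mpoly set)"
  proof (rule mpoly.card_le_card_if_coefficients_vanish[where f = ?T])
    show "?T ` S \<subseteq> mpoly.span ((\<lambda>b. Poly_Mapping.single b 1) ` ?B)"
    proof
      fix v assume "v \<in> ?T ` S"
      then obtain s where "v = ?T s"
        by blast
      also have "\<dots> = (\<Sum>b\<in>?B. smult_mp (Poly_Mapping.lookup s b) (Poly_Mapping.single b 1))"
        unfolding restrict_terms_def
        by (intro sum.cong refl poly_mapping_eqI) (simp add: lookup_single when_def)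
      also have "\<dots> \<in> mpoly.span ((\<lambda>b. Poly_Mapping.single b 1) ` ?B)"
        by (intro mpoly.span_sum mpoly.span_scale mpoly.span_base) auto
      finally show "v \<in> mpoly.span ((\<lambda>b. Poly_Mapping.single b 1) ` ?B)" .
    qed
    fix c assume "(\<Sum>s\<in>S. smult_mp (c s) (?T s)) = 0"
    then have "?T (\<Sum>s\<in>S. smult_mp (c s) s) = 0"
      by (simp add: restrict_terms_sum_smult assms(2))
    moreover have "(\<Sum>s\<in>S. smult_mp (c s) s) \<in> R n"
      using \<open>S \<subseteq> R n\<close> by (auto intro!: R_sum R_smult)
    ultimately show "\<forall>s\<in>S. c s = 0"
      using diff_restrict_terms_mem_monomial_ideal[OF assms(1,2)] indep by fastforce
  qed (use \<open>finite S\<close> assms(2) in auto)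
  also have "\<dots> = card ?B"
    by (intro card_image inj_on_subset[OF inj_single_one]) simp
  finally show ?thesis .
qed

theorem quot_dim_monomial_ideal:
  assumes "finite Ms" "finite (standard_monomials n Ms)"
  shows "quot_dim n (monomial_ideal n Ms :: 'k::field mpoly set) = enat (card (standard_monomials n Ms))"
  unfolding quot_dim_def
proof (rule antisym)
  show "Sup {enat (card S) |S. indep_mod n (monomial_ideal n Ms :: 'k mpoly set) S}
          \<le> enat (card (standard_monomials n Ms))"
    using card_le_card_standard_monomials[OF assms] by (auto intro!: Sup_least)
  have "card ((\<lambda>b. Poly_Mapping.single b (1::'k)) ` standard_monomials n Ms) = card (standard_monomials n Ms)"
    by (intro card_image inj_on_subset[OF inj_single_one]) simp
  then show "enat (card (standard_monomials n Ms))
          \<le> Sup {enat (card S) |S. indep_mod n (monomial_ideal n Ms :: 'k mpoly set) S}"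
    using indep_mod_standard_monomials[OF assms(2)] by (intro Sup_upper) force
qed

section \<open>The determinant of a diagonal matrix plus the all-ones matrix\<close>

lemma prod_plus_sum_prods_lessThan_Suc:
  fixes d :: "nat \<Rightarrow> 'a::comm_ring_1"
  shows "(\<Prod>k<Suc m. d k) + (\<Sum>k<Suc m. \<Prod>l<Suc m. if l = k then 1 else d l)
       = d 0 * ((\<Prod>k<m. d (Suc k)) + (\<Sum>k<m. \<Prod>l<m. if l = k then 1 else d (Suc l))) + (\<Prod>l<m. d (Suc l))"
  by (simp add: prod.lessThan_Suc_shift sum.lessThan_Suc_shift sum_distrib_left algebra_simps
      del: prod.lessThan_Suc sum.lessThan_Suc)

text \<open>Subtracting the first row from all other rows leaves an upper triangular matrix
  with diagonal \<open>1, d 1, \<dots>, d m\<close>.\<close>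

lemma det_first_row_ones:
  fixes d :: "nat \<Rightarrow> 'a::comm_ring_1"
  shows "det (mat (Suc m) (Suc m) (\<lambda>(i, j). if i = 0 then 1 else if i = j then d i + 1 else 1))
       = (\<Prod>l<m. d (Suc l))"
proof -
  let ?B = "mat (Suc m) (Suc m) (\<lambda>(i, j). if i = 0 then 1 else if i = j then d i + 1 else 1)"
  let ?E = "mat (Suc m) (Suc m) (\<lambda>(i, j). if i = j then 1 else if j = 0 then -1 else (0::'a))"
  let ?U = "mat (Suc m) (Suc m) (\<lambda>(i, j). if i = 0 then 1 else if i = j then d i else (0::'a))"
  have "?E * ?B = ?U"
  proof (rule eq_matI)
    fix i j assume ij: "i < dim_row ?U" "j < dim_col ?U"
    have "(?E * ?B) $$ (i, j) = (\<Sum>k\<in>{0..<Suc m}. ?E $$ (i, k) * ?B $$ (k, j))"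
      using ij by (simp add: scalar_prod_def)
    also have "\<dots> = (\<Sum>k\<in>{0..<Suc m}. (if k = i then ?B $$ (k, j) else 0)
                                       + (if k = 0 \<and> i \<noteq> 0 then - ?B $$ (k, j) else 0))"
      using ij by (intro sum.cong) auto
    also have "\<dots> = ?U $$ (i, j)"
      using ij by (auto simp: sum.distrib)
    finally show "(?E * ?B) $$ (i, j) = ?U $$ (i, j)" .
  qed auto
  moreover have "det ?E = 1"
    by (subst det_lower_triangular[of "Suc m"]) (auto simp: prod_list_diag_prod)
  moreover have "det (?E * ?B) = det ?E * det ?B"
    by (rule det_mult[of _ "Suc m"]) auto
  moreover have "det ?U = (\<Prod>l<m. d (Suc l))"
  proof -
    have "det ?U = (\<Prod>i<Suc m. ?U $$ (i, i))"
      by (subst det_upper_triangular[of _ "Suc m"]) (auto simp: prod_list_diag_prod atLeast0LessThan)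
    also have "\<dots> = (\<Prod>l<m. d (Suc l))"
      by (simp add: prod.lessThan_Suc_shift del: prod.lessThan_Suc)
    finally show ?thesis .
  qed
  ultimately show ?thesis
    by simp
qed

lemma det_diag_plus_ones:
  fixes d :: "nat \<Rightarrow> 'a::comm_ring_1"
  shows "det (mat m m (\<lambda>(k, l). if k = l then d k + 1 else 1))
       = (\<Prod>k<m. d k) + (\<Sum>k<m. \<Prod>l<m. if l = k then 1 else d l)"
proof (induction m arbitrary: d)
  case 0
  show ?case
    by (simp add: det_dim_zero)
next
  case (Suc m)
  let ?M = "\<lambda>r0. mat\<^sub>r (Suc m) (Suc m) (\<lambda>i. if i = 0 then r0
                      else vec (Suc m) (\<lambda>j. if i = j then d i + 1 else 1))"
  let ?r = "vec (Suc m) (\<lambda>j. if j = 0 then d 0 else 0)"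
  let ?ones = "vec (Suc m) (\<lambda>j. 1)"
  \<comment> \<open>The first row is \<open>d 0 e\<^sub>0 + (1, \<dots>, 1)\<close>; the determinant is linear in it.\<close>
  have "mat (Suc m) (Suc m) (\<lambda>(k, l). if k = l then d k + 1 else 1) = ?M (?r + ?ones)"
    by (rule eq_matI) auto
  then have "det (mat (Suc m) (Suc m) (\<lambda>(k, l). if k = l then d k + 1 else 1)) = det (?M ?r) + det (?M ?ones)"
    using det_row_add[where k = 0 and n = "Suc m" and a = "\<lambda>_. ?r" and b = "\<lambda>_. ?ones"
        and c = "\<lambda>i. vec (Suc m) (\<lambda>j. if i = j then d i + 1 else 1)"] by auto
  also have "det (?M ?ones) = (\<Prod>l<m. d (Suc l))"
  proof -
    have "?M ?ones = mat (Suc m) (Suc m) (\<lambda>(i, j). if i = 0 then 1 else if i = j then d i + 1 else 1)"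
      by (rule eq_matI) auto
    then show ?thesis
      by (simp add: det_first_row_ones)
  qed
  also have "det (?M ?r) = d 0 * det (mat m m (\<lambda>(k, l). if k = l then d (Suc k) + 1 else 1))"
  proof -
    have "det (?M ?r) = (\<Sum>j<Suc m. ?M ?r $$ (0, j) * cofactor (?M ?r) 0 j)"
      by (rule laplace_expansion_row) auto
    also have "\<dots> = d 0 * det (mat_delete (?M ?r) 0 0)"
      by (simp add: sum.lessThan_Suc_shift cofactor_def del: sum.lessThan_Suc)
    also have "mat_delete (?M ?r) 0 0 = mat m m (\<lambda>(k, l). if k = l then d (Suc k) + 1 else 1)"
      unfolding mat_delete_def by (rule eq_matI) auto
    finally show ?thesis .
  qed
  finally show ?case
    by (simp only: Suc.IH prod_plus_sum_prods_lessThan_Suc)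
qed

section \<open>Lattice points of a box with at most one coordinate at its maximum\<close>

definition box_at_most_one_top :: "'a set \<Rightarrow> ('a \<Rightarrow> nat) \<Rightarrow> ('a \<Rightarrow> nat) set" where
  "box_at_most_one_top A e = {f \<in> Pi\<^sub>E A (\<lambda>i. {..<e i}).
     \<forall>i\<in>A. \<forall>j\<in>A. i \<noteq> j \<longrightarrow> f i < e i - 1 \<or> f j < e j - 1}"

lemma box_at_most_one_top_eq_Un:
  assumes "\<forall>i\<in>A. 1 \<le> e i"
  shows "box_at_most_one_top A e = Pi\<^sub>E A (\<lambda>j. {..<e j - 1})
           \<union> (\<Union>i\<in>A. Pi\<^sub>E A (\<lambda>j. if j = i then {e i - 1} else {..<e j - 1}))"
proof (intro equalityI subsetI)
  fix f assume "f \<in> box_at_most_one_top A e"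
  then have f: "f \<in> extensional A" "\<And>i. i \<in> A \<Longrightarrow> f i < e i"
    and pair: "\<And>i j. i \<in> A \<Longrightarrow> j \<in> A \<Longrightarrow> i \<noteq> j \<Longrightarrow> f i < e i - 1 \<or> f j < e j - 1"
    unfolding box_at_most_one_top_def PiE_iff by auto
  show "f \<in> Pi\<^sub>E A (\<lambda>j. {..<e j - 1}) \<union> (\<Union>i\<in>A. Pi\<^sub>E A (\<lambda>j. if j = i then {e i - 1} else {..<e j - 1}))"
  proof (cases "\<forall>j\<in>A. f j < e j - 1")
    case True
    then have "f \<in> Pi\<^sub>E A (\<lambda>j. {..<e j - 1})"
      using f(1) by (simp add: PiE_iff)
    then show ?thesis
      by blast
  next
    case False
    then obtain i where i: "i \<in> A" "\<not> f i < e i - 1"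
      by blast
    then have "f i = e i - 1"
      using f(2)[of i] by linarith
    moreover have "f j < e j - 1" if "j \<in> A" "j \<noteq> i" for j
      using pair[OF i(1) that(1)] that(2) i(2) by blast
    ultimately have "f \<in> Pi\<^sub>E A (\<lambda>j. if j = i then {e i - 1} else {..<e j - 1})"
      using f(1) by (simp add: PiE_iff)
    then show ?thesis
      using i(1) by blast
  qed
next
  fix f assume "f \<in> Pi\<^sub>E A (\<lambda>j. {..<e j - 1}) \<union> (\<Union>i\<in>A. Pi\<^sub>E A (\<lambda>j. if j = i then {e i - 1} else {..<e j - 1}))"
  then consider "f \<in> Pi\<^sub>E A (\<lambda>j. {..<e j - 1})"
    | i where "i \<in> A" "f \<in> Pi\<^sub>E A (\<lambda>j. if j = i then {e i - 1} else {..<e j - 1})"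
    by blast
  then show "f \<in> box_at_most_one_top A e"
  proof cases
    case 1
    then show ?thesis
      unfolding box_at_most_one_top_def by (auto simp: PiE_iff)
  next
    case 2
    then have "f i = e i - 1" "\<And>j. j \<in> A \<Longrightarrow> j \<noteq> i \<Longrightarrow> f j < e j - 1"
      by (auto simp: PiE_iff)
    moreover have "f j < e j" if "j \<in> A" for j
      using calculation that assms by (cases "j = i") fastforce+
    ultimately show ?thesis
      using 2 unfolding box_at_most_one_top_def by (auto simp: PiE_iff)
  qed
qed

lemma card_box_at_most_one_top:
  assumes "finite A" "\<forall>i\<in>A. 1 \<le> e i"
  shows "card (box_at_most_one_top A e)
       = (\<Prod>j\<in>A. e j - 1) + (\<Sum>i\<in>A. \<Prod>j\<in>A. if j = i then 1 else e j - 1)"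
proof -
  let ?Q = "\<lambda>i. Pi\<^sub>E A (\<lambda>j. if j = i then {e i - 1} else {..<e j - 1})"
  have top: "f i = e i - 1" if "f \<in> ?Q i" "i \<in> A" for f i
    using PiE_mem[OF that] by simp
  have below_top: "f j < e j - 1" if "f \<in> ?Q i" "j \<in> A" "j \<noteq> i" for f i j
    using PiE_mem[OF that(1,2)] that(3) by simp
  have "finite (?Q i)" for i
    using assms(1) by (intro finite_PiE) auto
  moreover have "Pi\<^sub>E A (\<lambda>j. {..<e j - 1}) \<inter> (\<Union>i\<in>A. ?Q i) = {}"
  proof (intro equals0I)
    fix f assume "f \<in> Pi\<^sub>E A (\<lambda>j. {..<e j - 1}) \<inter> (\<Union>i\<in>A. ?Q i)"
    then obtain i where "i \<in> A" "f \<in> ?Q i" "f i < e i - 1"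
      using PiE_mem by fastforce
    then show False
      using top[of f i] by simp
  qed
  moreover have "?Q i \<inter> ?Q j = {}" if "i \<in> A" "j \<in> A" "i \<noteq> j" for i j
  proof (intro equals0I)
    fix f assume "f \<in> ?Q i \<inter> ?Q j"
    then have "f i = e i - 1" "f i < e i - 1"
      using top[of f i] below_top[of f j i] that by auto
    then show False
      by simp
  qed
  ultimately have "card (box_at_most_one_top A e)
      = card (Pi\<^sub>E A (\<lambda>j. {..<e j - 1})) + (\<Sum>i\<in>A. card (?Q i))"
    unfolding box_at_most_one_top_eq_Un[OF assms(2)] using assms(1)
    by (simp add: card_Un_disjoint card_UN_disjoint finite_PiE)
  then show ?thesis
    using assms(1) by (simp add: card_PiE if_distrib[of card] cong: if_cong)
qed

lemma bij_betw_restrict_lookup: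
  assumes "finite A" "F \<subseteq> extensional A"
  shows "bij_betw (\<lambda>b. restrict (Poly_Mapping.lookup b) A)
           {b :: 'a \<Rightarrow>\<^sub>0 'b::zero. Poly_Mapping.keys b \<subseteq> A \<and> restrict (Poly_Mapping.lookup b) A \<in> F} F"
  unfolding bij_betw_def
proof (intro conjI inj_onI subset_antisym subsetI)
  fix b b' :: "'a \<Rightarrow>\<^sub>0 'b"
  assume "b \<in> {b. Poly_Mapping.keys b \<subseteq> A \<and> restrict (Poly_Mapping.lookup b) A \<in> F}"
    and "b' \<in> {b. Poly_Mapping.keys b \<subseteq> A \<and> restrict (Poly_Mapping.lookup b) A \<in> F}"
    and eq: "restrict (Poly_Mapping.lookup b) A = restrict (Poly_Mapping.lookup b') A"
  then have "Poly_Mapping.keys b \<subseteq> A" "Poly_Mapping.keys b' \<subseteq> A"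
    by auto
  then show "b = b'"
    using fun_cong[OF eq] by (intro poly_mapping_eqI) (metis in_keys_iff restrict_apply' subsetD)
next
  fix f assume f: "f \<in> F"
  define b where "b = Abs_poly_mapping (\<lambda>i. if i \<in> A then f i else (0::'b))"
  have lookup_b: "Poly_Mapping.lookup b = (\<lambda>i. if i \<in> A then f i else 0)"
    unfolding b_def using assms(1) by (intro Abs_poly_mapping_inverse) (auto elim: finite_subset[rotated])
  have "restrict (Poly_Mapping.lookup b) A = f"
    using f assms(2) by (auto simp: lookup_b extensional_def fun_eq_iff)
  moreover have "Poly_Mapping.keys b \<subseteq> A"
    by (auto simp: in_keys_iff lookup_b split: if_splits)
  ultimately show "f \<in> (\<lambda>b. restrict (Poly_Mapping.lookup b) A)
                         ` {b. Poly_Mapping.keys b \<subseteq> A \<and> restrict (Poly_Mapping.lookup b) A \<in> F}"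
    using f by (intro image_eqI[of _ _ b]) auto
qed auto

section \<open>The 1-skeleton ideal of a multigraph that is complete on the non-root vertices\<close>

definition vertex_degree :: "nat \<Rightarrow> (nat \<Rightarrow> nat \<Rightarrow> nat) \<Rightarrow> nat \<Rightarrow> nat" where
  "vertex_degree n a i = dA n a {i} i"

definition skeleton1_exponents :: "nat \<Rightarrow> (nat \<Rightarrow> nat \<Rightarrow> nat) \<Rightarrow> (nat \<Rightarrow>\<^sub>0 nat) set" where
  "skeleton1_exponents n a =
     {(\<Sum>i\<in>A. Poly_Mapping.single i (dA n a A i)) | A. A \<noteq> {} \<and> A \<subseteq> {1..n} \<and> card A \<le> 2}"

definition complete_on_nonroot :: "nat \<Rightarrow> (nat \<Rightarrow> nat \<Rightarrow> nat) \<Rightarrow> bool" where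
  "complete_on_nonroot n a \<longleftrightarrow> (\<forall>i\<in>{1..n}. \<forall>j\<in>{1..n}. a i j = (if i = j then 0 else 1))"

lemma complete_on_nonrootD:
  "complete_on_nonroot n a \<Longrightarrow> i \<in> {1..n} \<Longrightarrow> j \<in> {1..n} \<Longrightarrow> a i j = (if i = j then 0 else 1)"
  unfolding complete_on_nonroot_def by blast

lemma skeleton1_ideal_eq_monomial_ideal:
  "skeleton1_ideal n a = monomial_ideal n (skeleton1_exponents n a)"
  unfolding skeleton1_ideal_def skeleton1_gens_def skeleton1_exponents_def mA_def
  by (rule arg_cong[where f = "ideal_gen n"]) auto

lemma nonempty_subsets_card_le_2_eq:
  assumes "finite S"
  shows "{A. A \<noteq> {} \<and> A \<subseteq> S \<and> card A \<le> 2}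
       = (\<lambda>i. {i}) ` S \<union> (\<lambda>(i, j). {i, j}) ` {(i, j). i \<in> S \<and> j \<in> S \<and> i \<noteq> j}"
proof (intro equalityI subsetI)
  fix A assume "A \<in> {A. A \<noteq> {} \<and> A \<subseteq> S \<and> card A \<le> 2}"
  then have A: "A \<noteq> {}" "A \<subseteq> S" "card A \<le> 2"
    by auto
  then have "card A \<noteq> 0"
    using finite_subset[OF _ assms] by simp
  then have "card A = 1 \<or> card A = 2"
    using A(3) by linarith
  then show "A \<in> (\<lambda>i. {i}) ` S \<union> (\<lambda>(i, j). {i, j}) ` {(i, j). i \<in> S \<and> j \<in> S \<and> i \<noteq> j}"
    using A(2) by (auto simp: card_1_singleton_iff card_2_iff)
next
  fix A assume "A \<in> (\<lambda>i. {i}) ` S \<union> (\<lambda>(i, j). {i, j}) ` {(i, j). i \<in> S \<and> j \<in> S \<and> i \<noteq> j}"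
  then show "A \<in> {A. A \<noteq> {} \<and> A \<subseteq> S \<and> card A \<le> 2}"
    by auto
qed

lemma finite_skeleton1_exponents: "finite (skeleton1_exponents n a)"
proof -
  have "{A. A \<noteq> {} \<and> A \<subseteq> {1..n} \<and> card A \<le> 2} \<subseteq> Pow {1..n}"
    by auto
  then show ?thesis
    unfolding skeleton1_exponents_def by (simp add: finite_subset)
qed

lemma dA_pair:
  assumes "i \<in> {1..n}" "j \<in> {1..n}" "i \<noteq> j" "a i j = 1"
  shows "dA n a {i, j} i = vertex_degree n a i - 1"
proof -
  have "dA n a {i, j} i = sum (a i) (({0..n} - {i}) - {j})"
    unfolding dA_def by (simp add: Diff_insert2[symmetric] insert_commute)
  also have "\<dots> = vertex_degree n a i - a i j"
    unfolding vertex_degree_def dA_def using assms by (subst sum_diff1_nat) auto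
  finally show ?thesis
    using assms(4) by simp
qed

lemma skeleton1_exponents_complete:
  assumes "complete_on_nonroot n a"
  shows "skeleton1_exponents n a
       = (\<lambda>i. Poly_Mapping.single i (vertex_degree n a i)) ` {1..n}
         \<union> (\<lambda>(i, j). Poly_Mapping.single i (vertex_degree n a i - 1) + Poly_Mapping.single j (vertex_degree n a j - 1))
            ` {(i, j). i \<in> {1..n} \<and> j \<in> {1..n} \<and> i \<noteq> j}"
proof -
  let ?F = "\<lambda>A. \<Sum>k\<in>A. Poly_Mapping.single k (dA n a A k)"
  have pair: "dA n a {i, j} i = vertex_degree n a i - 1" "dA n a {i, j} j = vertex_degree n a j - 1"
    if "i \<in> {1..n}" "j \<in> {1..n}" "i \<noteq> j" for i j
    using dA_pair[of i n j a] dA_pair[of j n i a] complete_on_nonrootD[OF assms] that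
    by (auto simp: insert_commute)
  have "skeleton1_exponents n a = ?F ` {A. A \<noteq> {} \<and> A \<subseteq> {1..n} \<and> card A \<le> 2}"
    unfolding skeleton1_exponents_def by (simp only: image_Collect)
  also have "\<dots> = (\<lambda>i. ?F {i}) ` {1..n} \<union> (\<lambda>(i, j). ?F {i, j}) ` {(i, j). i \<in> {1..n} \<and> j \<in> {1..n} \<and> i \<noteq> j}"
    unfolding nonempty_subsets_card_le_2_eq[OF finite_atLeastAtMost] image_Un image_image
    by (simp add: case_prod_beta')
  finally show ?thesis
    by (auto simp: pair vertex_degree_def intro!: arg_cong2[where f = "(\<union>)"] image_cong)
qed

lemma exists_add_iff_lookup_le:
  "(\<exists>c. b = c + m) \<longleftrightarrow> (\<forall>k. Poly_Mapping.lookup m k \<le> Poly_Mapping.lookup (b :: 'a \<Rightarrow>\<^sub>0 nat) k)"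
proof
  assume "\<forall>k. Poly_Mapping.lookup m k \<le> Poly_Mapping.lookup b k"
  then have "b = (b - m) + m"
    by (intro poly_mapping_eqI) (simp add: lookup_add lookup_minus)
  then show "\<exists>c. b = c + m" ..
qed (auto simp: lookup_add)

lemma standard_monomials_skeleton1_complete:
  assumes "complete_on_nonroot n a"
  shows "standard_monomials n (skeleton1_exponents n a)
       = {b. Poly_Mapping.keys b \<subseteq> {1..n}
             \<and> restrict (Poly_Mapping.lookup b) {1..n} \<in> box_at_most_one_top {1..n} (vertex_degree n a)}"
proof -
  have single: "(\<forall>c. b \<noteq> c + Poly_Mapping.single i k) \<longleftrightarrow> Poly_Mapping.lookup b i < k" for b :: "nat \<Rightarrow>\<^sub>0 nat" and i k
    using exists_add_iff_lookup_le[of b "Poly_Mapping.single i k"]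
    by (auto simp: lookup_add lookup_single when_def not_le split: if_splits)
  have pair: "(\<forall>c. b \<noteq> c + (Poly_Mapping.single i k + Poly_Mapping.single j l))
      \<longleftrightarrow> Poly_Mapping.lookup b i < k \<or> Poly_Mapping.lookup b j < l" if "i \<noteq> j" for b :: "nat \<Rightarrow>\<^sub>0 nat" and i j k l
    using exists_add_iff_lookup_le[of b "Poly_Mapping.single i k + Poly_Mapping.single j l"] that
    by (auto simp: lookup_add lookup_single when_def not_le split: if_splits)
  have "(\<forall>m\<in>skeleton1_exponents n a. \<nexists>c. b = c + m)
      \<longleftrightarrow> restrict (Poly_Mapping.lookup b) {1..n} \<in> box_at_most_one_top {1..n} (vertex_degree n a)" for b
    unfolding skeleton1_exponents_complete[OF assms] box_at_most_one_top_def
    by (simp add: ball_Un Ball_image_comp single pair restrict_PiE_iff Pi_iff) (meson atLeastAtMost_iff)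
  then show ?thesis
    unfolding standard_monomials_def by blast
qed

lemma vertex_degree_ge:
  assumes "complete_on_nonroot n a" "i \<in> {1..n}"
  shows "n - 1 \<le> vertex_degree n a i"
proof -
  have "(\<Sum>j\<in>{1..n} - {i}. a i j) = (\<Sum>j\<in>{1..n} - {i}. 1)"
    using complete_on_nonrootD[OF assms] by (intro sum.cong) auto
  then have "n - 1 = (\<Sum>j\<in>{1..n} - {i}. a i j)"
    using assms(2) by simp
  also have "\<dots> \<le> (\<Sum>j\<in>{0..n} - {i}. a i j)"
    by (rule sum_mono2) auto
  finally show ?thesis
    unfolding vertex_degree_def dA_def by simp
qed

theorem quot_dim_skeleton1_ideal_complete:
  assumes "complete_on_nonroot n a"
  shows "quot_dim n (skeleton1_ideal n a :: 'k::field mpoly set)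
       = enat (card (box_at_most_one_top {1..n} (vertex_degree n a)))"
proof -
  let ?box = "box_at_most_one_top {1..n} (vertex_degree n a)"
  have "?box \<subseteq> extensional {1..n}"
    unfolding box_at_most_one_top_def by (auto simp: PiE_iff)
  then have bij: "bij_betw (\<lambda>b. restrict (Poly_Mapping.lookup b) {1..n})
                    (standard_monomials n (skeleton1_exponents n a)) ?box"
    unfolding standard_monomials_skeleton1_complete[OF assms]
    by (rule bij_betw_restrict_lookup[OF finite_atLeastAtMost])
  have "finite ?box"
    by (rule finite_subset[of _ "Pi\<^sub>E {1..n} (\<lambda>i. {..<vertex_degree n a i})"])
      (auto simp: box_at_most_one_top_def intro: finite_PiE)
  then have "finite (standard_monomials n (skeleton1_exponents n a))"
    using bij_betw_finite[OF bij] by simp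
  then show ?thesis
    unfolding skeleton1_ideal_eq_monomial_ideal bij_betw_same_card[OF bij, symmetric]
    by (rule quot_dim_monomial_ideal[OF finite_skeleton1_exponents])
qed

lemma trunc_Q_complete:
  assumes "complete_on_nonroot n a"
  shows "trunc_Q n a = mat n n (\<lambda>(k, l). if k = l then (int (vertex_degree n a (Suc k)) - 1) + 1 else 1)"
    (is "_ = ?M")
proof (rule eq_matI)
  fix k l assume "k < dim_row ?M" "l < dim_col ?M"
  then have kl: "Suc k \<in> {1..n}" "Suc l \<in> {1..n}"
    by auto
  have "(\<Sum>j\<in>{0..n}. a (Suc k) j) = a (Suc k) (Suc k) + vertex_degree n a (Suc k)"
    unfolding vertex_degree_def dA_def using kl(1) by (subst sum.remove[of _ "Suc k"]) auto
  then have "(\<Sum>j\<in>{0..n}. int (a (Suc k) j)) = int (vertex_degree n a (Suc k))"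
    using complete_on_nonrootD[OF assms kl(1) kl(1)] by (simp flip: of_nat_sum)
  then show "trunc_Q n a $$ (k, l) = ?M $$ (k, l)"
    using kl complete_on_nonrootD[OF assms kl] by (auto simp: trunc_Q_def)
qed (auto simp: trunc_Q_def)

lemma int_card_box_at_most_one_top_reindex:
  assumes "\<forall>i\<in>{1..n}. 1 \<le> e i"
  shows "int (card (box_at_most_one_top {1..n} e))
       = (\<Prod>k<n. int (e (Suc k)) - 1) + (\<Sum>k<n. \<Prod>l<n. if l = k then 1 else int (e (Suc l)) - 1)"
proof -
  have int_diff: "int (e (Suc k) - 1) = int (e (Suc k)) - 1" if "k \<in> {..<n}" for k
    using assms that by (simp add: of_nat_diff)
  have "card (box_at_most_one_top {1..n} e)
      = (\<Prod>j\<in>{1..n}. e j - 1) + (\<Sum>i\<in>{1..n}. \<Prod>j\<in>{1..n}. if j = i then 1 else e j - 1)"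
    by (rule card_box_at_most_one_top[OF finite_atLeastAtMost assms])
  also have "\<dots> = (\<Prod>k<n. e (Suc k) - 1) + (\<Sum>k<n. \<Prod>l<n. if l = k then 1 else e (Suc l) - 1)"
    unfolding image_Suc_lessThan[symmetric] by (simp add: prod.reindex sum.reindex)
  finally show ?thesis
    by (simp only: of_nat_add of_nat_prod of_nat_sum if_distrib[of int] of_nat_1)
      (intro arg_cong2[where f = "(+)"] prod.cong sum.cong if_cong refl; simp only: int_diff)
qed

theorem quot_dim_skeleton1_ideal_eq_det_trunc_Q:
  assumes "complete_on_nonroot n a" "\<forall>i\<in>{1..n}. 1 \<le> vertex_degree n a i"
  shows "\<exists>N. quot_dim n (skeleton1_ideal n a :: 'k::field mpoly set) = enat N \<and> int N = det (trunc_Q n a)"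
proof (intro exI conjI)
  show "quot_dim n (skeleton1_ideal n a :: 'k mpoly set)
      = enat (card (box_at_most_one_top {1..n} (vertex_degree n a)))"
    by (rule quot_dim_skeleton1_ideal_complete[OF assms(1)])
  show "int (card (box_at_most_one_top {1..n} (vertex_degree n a))) = det (trunc_Q n a)"
    unfolding trunc_Q_complete[OF assms(1)] det_diag_plus_ones
    by (rule int_card_box_at_most_one_top_reindex[OF assms(2)])
qed

theorem proposition1:
  fixes n r :: nat
  assumes "n \<ge> 1" and "r \<le> n"
  shows "\<exists>N. quot_dim n (skeleton1_ideal n (Gnr n r) :: 'k::field mpoly set) = enat N
             \<and> int N = det (trunc_Q n (Gnr n r))"
proof -
  have complete: "complete_on_nonroot n (Gnr n r)"
    by (simp add: complete_on_nonroot_def Gnr_def)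
  show ?thesis
  proof (cases "\<forall>i\<in>{1..n}. 1 \<le> vertex_degree n (Gnr n r) i")
    case True
    then show ?thesis
      by (rule quot_dim_skeleton1_ideal_eq_det_trunc_Q[OF complete])
  next
    case False
    then obtain i where i: "i \<in> {1..n}" "vertex_degree n (Gnr n r) i = 0"
      by (auto simp: not_le)
    then have "n = 1" "i = 1"
      using vertex_degree_ge[OF complete i(1)] assms(1) by auto
    then have "box_at_most_one_top {1..n} (vertex_degree n (Gnr n r)) = {}"
      using i(2) by (auto simp: box_at_most_one_top_def PiE_eq_empty_iff)
    moreover have "det (trunc_Q n (Gnr n r)) = 0"
      unfolding trunc_Q_complete[OF complete] det_diag_plus_ones using \<open>n = 1\<close> i by simp
    ultimately show ?thesis
      using quot_dim_skeleton1_ideal_complete[OF complete] by auto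
  qed
qed

end
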